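(* Let $k\ge2$, $p\in(0,1)$, $q=1-p$, and $R^*=\frac{(k-1)^{k-1}}{k^k}\cdot\frac1{p^{k-1}q}$. If $z\in\mathbb{C}$ with $|z|<R^*$ satisfies $\frac1qS^{(k)}(p^{k-1}qz)=1$, then $z=1$.
   Context: $s^{(k)}_i=\frac{k-1}{ki-1}\binom{ki-1}{i-1}$ for $i\ge1$, and $S^{(k)}(z)=\sum_{i\ge1}s^{(k)}_iz^i$; this series satisfies $S^{(k)}(z)=z/(1-S^{(k)}(z))^{k-1}$ within its disc of convergence. *)

theory Defs
  imports "HOL-Analysis.Analysis"
begin

definition s_coeff :: "nat \<Rightarrow> nat \<Rightarrow> real" where
  "s_coeff k i = (real k - 1) / (real k * real i - 1) * real ((k * i - 1) choose (i - 1))"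

definition S_series :: "nat \<Rightarrow> complex \<Rightarrow> complex" where
  "S_series k z = (\<Sum>i. complex_of_real (s_coeff k (Suc i)) * z ^ Suc i)"

end

theory Submission
  imports Defs "HOL-Analysis.FPS_Convergence"
begin

(* As formal power series, S = S^(k) is the compositional inverse of X (1 - X)^(k-1): for the
   inverse F, the series W = 1/(1 - F) satisfies W = 1 + X W^k, so the coefficients of the powers
   of W are the Raney numbers r/(kn+r) binom(kn+r, n), and F = X W^(k-1) has exactly the
   coefficients s^(k)_i. Since s^(k)_i <= binom(ki, i) <= (k^k/(k-1)^(k-1))^i, the series converges
   for |w| < (k-1)^(k-1)/k^k, where S(w) (1 - S(w))^(k-1) = w. With w = p^(k-1) q z inside this
   disc, S(w) = q forces w = q (1 - q)^(k-1) = p^(k-1) q, i.e. z = 1. *)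

unbundle no vec_syntax
notation fps_nth (infixl \<open>$\<close> 75)

(* The case r = n = 0 is separate because the formula would give 0/0 = 0 there. *)
definition raney :: "nat \<Rightarrow> nat \<Rightarrow> nat \<Rightarrow> real" where
  "raney k r n =
    (if r = 0 \<and> n = 0 then 1 else real r / real (k * n + r) * real ((k * n + r) choose n))"

lemma raney_Suc_Suc:
  assumes "k \<ge> 1"
  shows "raney k (Suc r) (Suc m) = raney k r (Suc m) + raney k (r + k) m"
proof -
  define N where "N = k * m + k + r"
  define A where "A = real (N choose m)"
  have "N > 0" "m \<le> N" using assms by (simp_all add: N_def trans_le_add1)
  have next_row: "real (Suc N choose Suc m) = (real N + 1) / (real m + 1) * A"
    using Suc_times_binomial_eq[of N m] unfolding A_def
    by (simp add: field_simps flip: of_nat_mult)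
  have next_col: "real (N choose Suc m) = (real N - real m) / (real m + 1) * A"
  proof -
    have "Suc m * (N choose Suc m) = (N - m) * (N choose m)"
      using binomial_absorb_comp[of N m] Suc_times_binomial[of m "N - 1"] \<open>N > 0\<close> by simp
    then have "(real m + 1) * real (N choose Suc m) = (real N - real m) * A"
      unfolding A_def using \<open>m \<le> N\<close> by (metis of_nat_Suc of_nat_diff of_nat_mult add.commute)
    then show ?thesis by (simp add: field_simps)
  qed
  have idx: "k * Suc m + Suc r = Suc N" "k * Suc m + r = N" "k * m + (r + k) = N"
    by (simp_all add: N_def)
  have lhs: "raney k (Suc r) (Suc m) = (real r + 1) / (real m + 1) * A"
  proof -
    have "raney k (Suc r) (Suc m) = (real r + 1) / (real N + 1) * ((real N + 1) / (real m + 1) * A)"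
      unfolding raney_def idx next_row by (simp add: algebra_simps del: binomial_Suc_Suc)
    also have "\<dots> = (real r + 1) / (real m + 1) * A"
      by (simp add: add_pos_pos)
    finally show ?thesis .
  qed
  have "raney k r (Suc m) + raney k (r + k) m
      = real r / real N * ((real N - real m) / (real m + 1) * A) + (real r + real k) / real N * A"
    unfolding raney_def idx A_def next_col using assms by simp
  also have "\<dots> = (real r * (real N - real m) + (real r + real k) * (real m + 1))
      / (real N * (real m + 1)) * A"
    using \<open>N > 0\<close> by (simp add: divide_simps) (simp add: algebra_simps)
  also have "real r * (real N - real m) + (real r + real k) * (real m + 1) = real N * (real r + 1)"
    by (simp add: N_def algebra_simps)
  finally show ?thesis
    unfolding lhs using \<open>N > 0\<close> by simp
qed

lemma fps_power_nth_eq_raney: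
  fixes W :: "'a :: {comm_ring_1, real_algebra_1} fps"
  assumes "k \<ge> 1" and W_eq: "W = 1 + fps_X * W ^ k"
  shows "(W ^ r) $ n = of_real (raney k r n)"
proof (induction n arbitrary: r)
  case 0
  have "W $ 0 = 1" by (subst W_eq) simp
  then show ?case by (simp add: fps_power_zeroth raney_def)
next
  case (Suc m)
  note coeff_m = Suc.IH
  show ?case
  proof (induction r)
    case 0
    then show ?case by (simp add: raney_def)
  next
    case (Suc r)
    have "W ^ Suc r = W ^ r + fps_X * W ^ (r + k)"
      using arg_cong[where f = "\<lambda>V. W ^ r * V", OF W_eq] by (simp add: algebra_simps power_add)
    then have "(W ^ Suc r) $ Suc m = (W ^ r) $ Suc m + (W ^ (r + k)) $ m"
      by simp
    then show ?case
      using Suc.IH coeff_m raney_Suc_Suc[OF \<open>k \<ge> 1\<close>] by simp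
  qed
qed

lemma s_coeff_Suc_eq_raney:
  assumes "k \<ge> 2"
  shows "s_coeff k (Suc n) = raney k (k - 1) n"
proof -
  have "k * Suc n - 1 = k * n + (k - 1)" using assms by (simp add: algebra_simps)
  moreover have "real k * real (Suc n) - 1 = real (k * n + (k - 1))" "real k - 1 = real (k - 1)"
    using assms by (simp_all add: of_nat_diff algebra_simps)
  moreover have "\<not> (k - 1 = 0 \<and> n = 0)" using assms by simp
  ultimately show ?thesis
    unfolding s_coeff_def raney_def by (simp only: if_False diff_Suc_1)
qed

definition S_fps :: "nat \<Rightarrow> complex fps" where
  "S_fps k = Abs_fps (\<lambda>n. if n = 0 then 0 else of_real (s_coeff k n))"

lemma S_fps_functional_equation:
  assumes "k \<ge> 2"
  shows "S_fps k * (1 - S_fps k) ^ (k - 1) = fps_X"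
proof -
  define F where "F = fps_inv (fps_X * (1 - fps_X) ^ (k - 1) :: complex fps)"
  have F0: "F $ 0 = 0" by (simp add: F_def fps_inv_def)
  have F_root: "F * (1 - F) ^ (k - 1) = fps_X"
  proof -
    have "fps_X * (1 - fps_X) ^ (k - 1) oo F = fps_X"
      unfolding F_def by (rule fps_inv_right) (simp_all add: fps_power_zeroth)
    then show ?thesis
      using F0
      by (simp add: fps_compose_mult_distrib fps_compose_power[symmetric] fps_compose_sub_distrib)
  qed
  define W where "W = inverse (1 - F)"
  have W_inverse: "W * (1 - F) = 1"
    unfolding W_def using F0 by (intro inverse_mult_eq_1) simp
  have F_eq: "F = fps_X * W ^ (k - 1)"
  proof -
    have "fps_X * W ^ (k - 1) = F * ((1 - F) * W) ^ (k - 1)"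
      by (subst F_root[symmetric]) (simp add: power_mult_distrib)
    then show ?thesis using W_inverse by (simp add: mult.commute)
  qed
  have "W = 1 + F * W" using W_inverse by (simp add: algebra_simps)
  also have "F * W = fps_X * W ^ k"
    using assms by (simp add: F_eq mult.assoc power_Suc2[symmetric])
  finally have "W = 1 + fps_X * W ^ k" .
  then have W_power: "(W ^ (k - 1)) $ n = of_real (raney k (k - 1) n)" for n
    using assms by (intro fps_power_nth_eq_raney) simp_all
  have "S_fps k $ n = F $ n" for n
  proof (cases n)
    case 0
    then show ?thesis by (simp add: S_fps_def F0)
  next
    case (Suc m)
    then show ?thesis
      using W_power[of m] by (simp add: S_fps_def F_eq s_coeff_Suc_eq_raney assms)
  qed
  then have "S_fps k = F" by (rule fps_ext)
  with F_root show ?thesis by simp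
qed

lemma binomial_term_le_power:
  fixes a b :: real
  assumes "0 \<le> a" "0 \<le> b" "j \<le> n"
  shows "real (n choose j) * a ^ j * b ^ (n - j) \<le> (a + b) ^ n"
proof -
  have "real (n choose j) * a ^ j * b ^ (n - j) \<le> (\<Sum>i\<le>n. real (n choose i) * a ^ i * b ^ (n - i))"
    using assms by (intro member_le_sum) auto
  also have "\<dots> = (a + b) ^ n" by (rule binomial_ring[symmetric])
  finally show ?thesis .
qed

lemma s_coeff_nonneg:
  assumes "k \<ge> 2" "n \<ge> 1"
  shows "0 \<le> s_coeff k n"
proof -
  have "real k * real n \<ge> 1"
    using assms mult_le_mono[of 1 k 1 n] by (simp flip: of_nat_mult)
  then show ?thesis
    unfolding s_coeff_def using assms by simp
qed

lemma s_coeff_le: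
  assumes "k \<ge> 2" "n \<ge> 1"
  shows "s_coeff k n \<le> (real k ^ k / (real k - 1) ^ (k - 1)) ^ n"
proof -
  have "real k - 1 > 0" "real k - 1 \<le> real k * real n - 1"
    using assms mult_left_mono[of 1 "real n" "real k"] by simp_all
  then have "0 \<le> (real k - 1) / (real k * real n - 1)" "(real k - 1) / (real k * real n - 1) \<le> 1"
    by (simp_all only: divide_le_eq_1_pos zero_le_divide_iff) linarith+
  then have "s_coeff k n \<le> real ((k * n - 1) choose (n - 1))"
    unfolding s_coeff_def using assms by (intro mult_left_le_one_le) auto
  also have "\<dots> \<le> real ((k * n) choose n)"
  proof -
    have "k * n = Suc (k * n - 1)" "n = Suc (n - 1)"
      using assms mult_le_mono[of 1 k 1 n] by simp_all
    then have "(k * n) choose n = ((k * n - 1) choose (n - 1)) + ((k * n - 1) choose n)"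
      by (metis binomial_Suc_Suc)
    then show ?thesis by simp
  qed
  also have "\<dots> \<le> real k ^ (k * n) / (real k - 1) ^ ((k - 1) * n)"
  proof -
    have "real ((k * n) choose n) * 1 ^ n * (real k - 1) ^ (k * n - n) \<le> (1 + (real k - 1)) ^ (k * n)"
      using assms by (intro binomial_term_le_power) auto
    moreover have "k * n - n = (k - 1) * n" by (simp add: algebra_simps)
    ultimately show ?thesis using assms by (simp add: field_simps)
  qed
  also have "\<dots> = (real k ^ k / (real k - 1) ^ (k - 1)) ^ n"
    by (simp add: power_divide power_mult)
  finally show ?thesis .
qed

lemma fps_conv_radius_S_fps:
  assumes "k \<ge> 2"
  shows "fps_conv_radius (S_fps k) \<ge> (real k - 1) ^ (k - 1) / real k ^ k"
  unfolding fps_conv_radius_def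
proof (rule conv_radius_geI_ex')
  define Q where "Q = real k ^ k / (real k - 1) ^ (k - 1)"
  fix r :: real
  assume "0 < r" "ereal r < (real k - 1) ^ (k - 1) / real k ^ k"
  then have "Q * r < 1" using assms by (simp add: Q_def field_simps)
  have "norm (S_fps k $ n * of_real r ^ n) \<le> (Q * r) ^ n" for n
  proof (cases "n = 0")
    case False
    then have "norm (S_fps k $ n * of_real r ^ n) = s_coeff k n * r ^ n"
      using assms s_coeff_nonneg[of k n] \<open>0 < r\<close> by (simp add: S_fps_def norm_mult norm_power)
    also have "\<dots> \<le> Q ^ n * r ^ n"
      using assms s_coeff_le[of k n] \<open>0 < r\<close> False unfolding Q_def by (simp add: mult_right_mono)
    finally show ?thesis by (simp add: power_mult_distrib)
  qed (simp add: S_fps_def)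
  moreover have "Q > 0" using assms by (simp add: Q_def)
  with \<open>Q * r < 1\<close> \<open>0 < r\<close> have "summable (\<lambda>n. (Q * r) ^ n)"
    by (intro summable_geometric) simp
  ultimately show "summable (\<lambda>n. S_fps k $ n * of_real r ^ n)"
    by (rule summable_comparison_test'[rotated])
qed

lemma S_series_eq_eval_fps: "S_series k w = eval_fps (S_fps k) w"
proof -
  define f where "f = (\<lambda>n. S_fps k $ n * w ^ n)"
  have "S_series k w = suminf (\<lambda>n. f (Suc n))"
    by (simp add: S_series_def f_def S_fps_def)
  also have "\<dots> = suminf f"
    unfolding suminf_def sums_Suc_iff by (simp add: f_def S_fps_def)
  finally show ?thesis by (simp add: eval_fps_def f_def)
qed

lemma S_series_functional_equation:
  assumes "k \<ge> 2" and "norm w < (real k - 1) ^ (k - 1) / real k ^ k"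
  shows "S_series k w * (1 - S_series k w) ^ (k - 1) = w"
proof -
  have "ereal (norm w) < (real k - 1) ^ (k - 1) / real k ^ k"
    using assms(2) by simp
  also have "\<dots> \<le> fps_conv_radius (S_fps k)"
    using assms(1) by (rule fps_conv_radius_S_fps)
  finally have S: "norm w < fps_conv_radius (S_fps k)" .
  then have "norm w < fps_conv_radius (1 - S_fps k)"
    using fps_conv_radius_diff[of 1 "S_fps k"] by (simp add: order.strict_trans2)
  then have "norm w < fps_conv_radius ((1 - S_fps k) ^ (k - 1))"
    using fps_conv_radius_power order.strict_trans2 by blast
  with S \<open>norm w < fps_conv_radius (1 - S_fps k)\<close>
  have "eval_fps (S_fps k * (1 - S_fps k) ^ (k - 1)) w
      = eval_fps (S_fps k) w * (1 - eval_fps (S_fps k) w) ^ (k - 1)"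
    by (simp add: eval_fps_mult eval_fps_power eval_fps_diff)
  then show ?thesis
    using S_fps_functional_equation[OF assms(1)] by (simp add: S_series_eq_eval_fps)
qed

theorem lemma4p3:
  fixes k :: nat and p q Rstar :: real and z :: complex
  assumes "k \<ge> 2"
    and "0 < p" and "p < 1"
    and "q = 1 - p"
    and "Rstar = (real k - 1) ^ (k - 1) / real k ^ k * (1 / (p ^ (k - 1) * q))"
    and "norm z < Rstar"
    and "S_series k (complex_of_real (p ^ (k - 1) * q) * z) / complex_of_real q = 1"
  shows "z = 1"
proof -
  define c where "c = p ^ (k - 1) * q"
  define w where "w = of_real c * z"
  have "q > 0" "c > 0" using assms by (simp_all add: c_def)
  have Rstar_eq: "Rstar = (real k - 1) ^ (k - 1) / real k ^ k / c"
    unfolding assms(5) c_def by simp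
  have "norm w < c * Rstar"
    using assms(6) \<open>c > 0\<close> by (simp add: w_def norm_mult)
  also have "c * Rstar = (real k - 1) ^ (k - 1) / real k ^ k"
    using \<open>c > 0\<close> by (simp add: Rstar_eq)
  finally have "S_series k w * (1 - S_series k w) ^ (k - 1) = w"
    by (rule S_series_functional_equation[OF assms(1)])
  moreover have "S_series k w = of_real q"
    using assms(7) \<open>q > 0\<close> by (simp add: w_def c_def divide_eq_eq)
  ultimately have "w = of_real c"
    using assms(4) by (simp add: c_def mult.commute)
  then show "z = 1"
    using \<open>c > 0\<close> by (simp add: w_def)
qed

end
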